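(* Let $R$ be a ring and $x\in J(R)$, the Jacobson radical of $R$. Then $H^1_x(R)=0$ if and only if $x$ is nilpotent.
   Context: All rings are commutative with identity. $H^1_x(R)$ is the first cohomology of the complex $0\to R\to R_x\to0$ ($R$ in degree $0$, natural localization map), i.e. $H^1_x(R)=R_x/\operatorname{im}(R\to R_x)$. *)

theory Defs
  imports Main
begin

(* Ideals of a commutative ring (type class idiom, ring = UNIV of the type) *)
definition is_ideal :: "'a::comm_ring_1 set \<Rightarrow> bool" where
  "is_ideal I \<longleftrightarrow> 0 \<in> I \<and> (\<forall>a\<in>I. \<forall>b\<in>I. a + b \<in> I) \<and> (\<forall>a\<in>I. \<forall>r. r * a \<in> I)"

definition maximal_ideal :: "'a::comm_ring_1 set \<Rightarrow> bool" where
  "maximal_ideal I \<longleftrightarrow> is_ideal I \<and> I \<noteq> UNIV \<and>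
     (\<forall>J. is_ideal J \<and> I \<subseteq> J \<longrightarrow> J = I \<or> J = UNIV)"

definition jacobson_radical :: "'a::comm_ring_1 set" where
  "jacobson_radical = \<Inter>{I. maximal_ideal I}"

definition nilpotent :: "'a::comm_ring_1 \<Rightarrow> bool" where
  "nilpotent x \<longleftrightarrow> (\<exists>n. x ^ n = 0)"

(* Localization R_x: a pair (r, n) represents r / x^n *)
definition loc_rel :: "'a::comm_ring_1 \<Rightarrow> (('a \<times> nat) \<times> ('a \<times> nat)) set" where
  "loc_rel x = {((r, n), (s, m)). \<exists>k. x ^ k * (x ^ m * r - x ^ n * s) = 0}"

definition localization :: "'a::comm_ring_1 \<Rightarrow> ('a \<times> nat) set set" where
  "localization x = UNIV // loc_rel x"

definition loc_map :: "'a::comm_ring_1 \<Rightarrow> 'a \<Rightarrow> ('a \<times> nat) set" where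
  "loc_map x r = loc_rel x `` {(r, 0)}"

(* H^1_x(R) = R_x / im(R \<rightarrow> R_x): r/x^n and s/x^m are identified iff their
   difference r/x^n - s/x^m = (x^m r - x^n s)/x^(n+m) lies in the image of R,
   i.e. equals t/1 in R_x for some t. *)
definition h1_rel :: "'a::comm_ring_1 \<Rightarrow> (('a \<times> nat) \<times> ('a \<times> nat)) set" where
  "h1_rel x = {((r, n), (s, m)). \<exists>t. ((x ^ m * r - x ^ n * s, n + m), (t, 0)) \<in> loc_rel x}"

definition H1 :: "'a::comm_ring_1 \<Rightarrow> ('a \<times> nat) set set" where
  "H1 x = UNIV // h1_rel x"

definition H1_zero :: "'a::comm_ring_1 \<Rightarrow> ('a \<times> nat) set" where
  "H1_zero x = h1_rel x `` {(0, 0)}"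

end

theory Submission imports Defs begin

text \<open>H^1_x(R) = 0 means that R -> R_x is onto. This happens iff 1/x lies in the image, i.e. iff
  x^k (1 - x t) = 0 for some t and k: such a relation gives x^k = x^(k+j) t^j, so every fraction
  a/x^j equals t^j a in R_x. For x in the Jacobson radical, 1 - x t is a unit, so the relation
  amounts to x^k = 0.\<close>

lemma is_ideal_mult_left: "is_ideal I \<Longrightarrow> a \<in> I \<Longrightarrow> r * a \<in> I"
  unfolding is_ideal_def by blast

lemma is_ideal_one_iff_UNIV:
  assumes "is_ideal I"
  shows "1 \<in> I \<longleftrightarrow> I = UNIV"
  using is_ideal_mult_left[OF assms, of 1] by (metis UNIV_I mult.right_neutral subsetI subset_antisym)

lemma is_ideal_principal: "is_ideal (range (\<lambda>r. r * a))"
  unfolding is_ideal_def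
proof (intro conjI ballI allI)
  show "0 \<in> range (\<lambda>r. r * a)" by (rule range_eqI[of _ _ 0]) simp
next
  fix u v assume "u \<in> range (\<lambda>r. r * a)" "v \<in> range (\<lambda>r. r * a)"
  then obtain p q where "u = p * a" "v = q * a" by auto
  then show "u + v \<in> range (\<lambda>r. r * a)"
    by (intro range_eqI[of _ _ "p + q"]) (simp add: distrib_right)
next
  fix u r assume "u \<in> range (\<lambda>r. r * a)"
  then obtain p where "u = p * a" by auto
  then show "r * u \<in> range (\<lambda>r. r * a)"
    by (intro range_eqI[of _ _ "r * p"]) (simp add: mult.assoc)
qed

lemma is_ideal_Union_chain:
  assumes "C \<noteq> {}" and "\<And>I. I \<in> C \<Longrightarrow> is_ideal I"
    and chain: "\<And>A B. A \<in> C \<Longrightarrow> B \<in> C \<Longrightarrow> A \<subseteq> B \<or> B \<subseteq> A"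
  shows "is_ideal (\<Union>C)"
  unfolding is_ideal_def
proof (intro conjI ballI allI)
  show "0 \<in> \<Union>C" using assms(1,2) by (auto simp: is_ideal_def)
next
  fix u v assume "u \<in> \<Union>C" "v \<in> \<Union>C"
  then obtain D where "D \<in> C" "u \<in> D" "v \<in> D" using chain by blast
  with assms(2) have "u + v \<in> D" unfolding is_ideal_def by blast
  with \<open>D \<in> C\<close> show "u + v \<in> \<Union>C" by blast
next
  fix u r assume "u \<in> \<Union>C"
  with assms(2) show "r * u \<in> \<Union>C" by (blast intro: is_ideal_mult_left)
qed

lemma maximal_ideal_containing_nonunit:
  fixes a :: "'a::comm_ring_1"
  assumes "\<not> a dvd 1"
  obtains M where "maximal_ideal M" and "a \<in> M"
proof -
  define S where "S = {I::'a set. is_ideal I \<and> a \<in> I \<and> 1 \<notin> I}"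
  have "range (\<lambda>r. r * a) \<in> S"
    using is_ideal_principal[of a] assms
    by (auto simp: S_def dvd_def mult.commute intro: range_eqI[of _ _ 1])
  then have "S \<noteq> {}" by auto
  then have "\<exists>M\<in>S. \<forall>X\<in>S. M \<subseteq> X \<longrightarrow> X = M"
  proof (rule subset_Zorn_nonempty)
    fix C assume "C \<noteq> {}" "subset.chain S C"
    then show "\<Union>C \<in> S"
      using is_ideal_Union_chain[of C] by (auto simp: S_def subset.chain_def)
  qed
  then obtain M where M: "M \<in> S" "\<And>X. X \<in> S \<Longrightarrow> M \<subseteq> X \<Longrightarrow> X = M" by blast
  have "maximal_ideal M"
    unfolding maximal_ideal_def
  proof (intro conjI allI impI)
    show "is_ideal M" "M \<noteq> UNIV" using M(1) by (auto simp: S_def)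
  next
    fix J assume J: "is_ideal J \<and> M \<subseteq> J"
    show "J = M \<or> J = UNIV"
    proof (cases "1 \<in> J")
      case True
      with J show ?thesis using is_ideal_one_iff_UNIV by blast
    next
      case False
      with J M show ?thesis by (auto simp: S_def)
    qed
  qed
  with M(1) show thesis by (auto simp: S_def intro: that)
qed

lemma jacobson_radical_one_minus_mult_unit:
  fixes x :: "'a::comm_ring_1"
  assumes "x \<in> jacobson_radical"
  shows "(1 - x * t) dvd 1"
proof (rule ccontr)
  assume "\<not> (1 - x * t) dvd 1"
  then obtain M where M: "maximal_ideal M" "1 - x * t \<in> M"
    by (rule maximal_ideal_containing_nonunit)
  then have ideal: "is_ideal M" unfolding maximal_ideal_def by blast
  have "x \<in> M" using assms M(1) unfolding jacobson_radical_def by blast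
  then have "(1 - x * t) + t * x \<in> M"
    using ideal M(2) is_ideal_mult_left unfolding is_ideal_def by blast
  then have "M = UNIV" using is_ideal_one_iff_UNIV[OF ideal] by (simp add: mult.commute)
  with M(1) show False unfolding maximal_ideal_def by blast
qed

lemma pow_eq_pow_add_mult_pow:
  fixes x :: "'a::comm_ring_1"
  assumes "x ^ k * (1 - x * t) = 0"
  shows "x ^ k = x ^ (k + j) * t ^ j"
proof (induction j)
  case (Suc j)
  have "x ^ (k + Suc j) * t ^ Suc j = x ^ j * t ^ j * (x ^ k * (x * t))"
    by (simp add: power_add mult_ac)
  also have "x ^ k * (x * t) = x ^ k" using assms by (simp add: right_diff_distrib)
  also have "x ^ j * t ^ j * x ^ k = x ^ (k + j) * t ^ j"
    by (simp add: power_add mult_ac)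
  finally show ?case using Suc.IH by simp
qed simp

lemma h1_rel_UNIV:
  fixes x :: "'a::comm_ring_1"
  assumes "x ^ k * (1 - x * t) = 0"
  shows "h1_rel x = UNIV"
proof -
  have "((r, n), (s, m)) \<in> h1_rel x" for r s :: 'a and n m :: nat
  proof -
    define a where "a = x ^ m * r - x ^ n * s"
    have "x ^ k * (a - x ^ (n + m) * (t ^ (n + m) * a)) = x ^ k * a - x ^ (k + (n + m)) * t ^ (n + m) * a"
      by (simp add: right_diff_distrib power_add mult_ac)
    also have "\<dots> = 0"
      using pow_eq_pow_add_mult_pow[OF assms, of "n + m"] by simp
    finally show ?thesis unfolding h1_rel_def loc_rel_def a_def by auto
  qed
  then show ?thesis by auto
qed

lemma H1_trivial_iff:
  fixes x :: "'a::comm_ring_1"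
  shows "H1 x = {H1_zero x} \<longleftrightarrow> (\<exists>t k. x ^ k * (1 - x * t) = 0)"
proof
  assume H: "H1 x = {H1_zero x}"
  have "h1_rel x `` {(1, 1)} \<in> H1 x" unfolding H1_def by (rule quotientI) simp
  then have "h1_rel x `` {(1, 1)} = h1_rel x `` {(0, 0)}" using H by (simp add: H1_zero_def)
  moreover have "((0, 0), (0, 0)) \<in> h1_rel x"
    unfolding h1_rel_def loc_rel_def by (auto intro!: exI[of _ 0])
  ultimately have "((1, 1), (0, 0)) \<in> h1_rel x" by blast
  then show "\<exists>t k. x ^ k * (1 - x * t) = 0" unfolding h1_rel_def loc_rel_def by auto
next
  assume "\<exists>t k. x ^ k * (1 - x * t) = 0"
  then have "h1_rel x = UNIV" using h1_rel_UNIV by blast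
  then show "H1 x = {H1_zero x}" unfolding H1_def H1_zero_def by (auto simp: quotient_def)
qed

theorem lemma3p3:
  fixes x :: "'a::comm_ring_1"
  assumes "x \<in> jacobson_radical"
  shows "H1 x = {H1_zero x} \<longleftrightarrow> nilpotent x"
  unfolding H1_trivial_iff nilpotent_def
proof
  assume "\<exists>t k. x ^ k * (1 - x * t) = 0"
  then obtain t k where rel: "x ^ k * (1 - x * t) = 0" by blast
  obtain u where "1 = (1 - x * t) * u"
    using jacobson_radical_one_minus_mult_unit[OF assms, of t] by (auto simp: dvd_def)
  then have "x ^ k = x ^ k * (1 - x * t) * u" by (simp add: mult.assoc)
  with rel show "\<exists>n. x ^ n = 0" by auto
next
  assume "\<exists>n. x ^ n = 0"
  then show "\<exists>t k. x ^ k * (1 - x * t) = 0" by (metis mult_zero_left)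
qed

end
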